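(* There is an absolute constant $c>0$ such that for every $\delta'\in(0,1)$, with probability at least $1-4\delta'$ over the draw of $\mathcal D$, any SBEED output $(\hat V,\hat\pi)$ satisfies $$\|\hat V-\mathcal C^{\hat\pi}_\lambda\hat V\|_{2,\mu}\le c\left(\sqrt{\frac{\jmath}{n}}+\sqrt{\epsilon_{\mathcal V,\mathcal P}}+\sqrt[4]{\frac{\jmath}{n}\epsilon_{\mathcal V,\mathcal P}}+\sqrt{\epsilon_{\mathcal G,\mathcal V,\mathcal P}}+\sqrt[4]{\frac{\iota}{n}\epsilon_{\mathcal G,\mathcal V,\mathcal P}}+\sqrt{\frac{\iota}{n}}\right),$$ where $\iota=V_{\lambda,\max}^2\ln\frac{|\mathcal V||\mathcal P||\mathcal G|}{\delta'}$ and $\jmath=V_{\lambda,\max}^2\ln\frac{|\mathcal V||\mathcal P|}{\delta'}$.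
   Context: Finite MDP with state space $\mathcal S$, action space $\mathcal A$, discount $\gamma\in[0,1)$, kernel $P$, reward $R:\mathcal S\times\mathcal A\to[0,R_{\max}]$; $\lambda>0$. $(\mathbb PV)(s,a)=\sum_{s'}P(s'\mid s,a)V(s')$; $(\mathcal C^\pi_\lambda V)(s,a)=R(s,a)+\gamma(\mathbb PV)(s,a)-\lambda\ln\pi(a\mid s)$. $\mu\in\Delta(\mathcal S\times\mathcal A)$, $\|f\|^2_{2,\mu}=\mathbb E_{\mu}[f(s,a)^2]$ (for $V$ depending only on $s$, $V-\mathcal C^\pi_\lambda V$ is $(s,a)\mapsto V(s)-(\mathcal C^\pi_\lambda V)(s,a)$). $V_{\lambda,\max}=(R_{\max}+\lambda\ln|\mathcal A|)/(1-\gamma)$. Finite classes $\mathcal V\subset[0,V_{\lambda,\max}]^{\mathcal S}$, $\mathcal P\subset\{\pi:\|\ln\pi\|_\infty\le V_{\lambda,\max}/\lambda\}$, $\mathcal G\subset[0,2V_{\lambda,\max}]^{\mathcal S\times\mathcal A}$. Dataset $\mathcal D=\{(s_i,a_i,r_i,s_i')\}_{i=1}^n$ with $(s_i,a_i)$ i.i.d. from $\mu$, $r_i=R(s_i,a_i)$, $s_i'\sim P(\cdot\mid s_i,a_i)$ independently. $\mathscr L_{\mathcal D}(V;V,\pi)=\frac1n\sum_i\big(V(s_i)-r_i-\gamma V(s_i')+\lambda\ln\pi(a_i\mid s_i)\big)^2$, $\mathscr R_{\mathcal D}(g;V,\pi)=\frac1n\sum_i\big(g(s_i,a_i)-r_i-\gamma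 V(s_i')+\lambda\ln\pi(a_i\mid s_i)\big)^2$. SBEED output: $(\hat V,\hat\pi)\in\arg\min_{V\in\mathcal V,\pi\in\mathcal P}\max_{g\in\mathcal G}\big[\mathscr L_{\mathcal D}(V;V,\pi)-\mathscr R_{\mathcal D}(g;V,\pi)\big]$. $\epsilon_{\mathcal V,\mathcal P}=\min_{V\in\mathcal V,\pi\in\mathcal P}\|V-\mathcal C^\pi_\lambda V\|^2_{2,\mu}$, $\epsilon_{\mathcal G,\mathcal V,\mathcal P}=\max_{V\in\mathcal V,\pi\in\mathcal P}\min_{g\in\mathcal G}\|g-\mathcal C^\pi_\lambda V\|^2_{2,\mu}$. *)

theory Defs
  imports "HOL-Probability.Probability"
begin

text \<open>Kernel P s a :: nat pmf, reward R s a, policies pi s :: nat pmf (pi(a|s) = pmf (pi s) a),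
  sampling distribution mu :: (nat * nat) pmf.  A data point is (s, a, s'); the reward is R s a.\<close>

type_synonym policy = "nat \<Rightarrow> nat pmf"

definition Vlmax :: "real \<Rightarrow> real \<Rightarrow> real \<Rightarrow> nat set \<Rightarrow> real" where
  "Vlmax \<gamma> Rmax lam A = (Rmax + lam * ln (real (card A))) / (1 - \<gamma>)"

definition softBellman ::
  "(nat \<Rightarrow> nat \<Rightarrow> real) \<Rightarrow> (nat \<Rightarrow> nat \<Rightarrow> nat pmf) \<Rightarrow> real \<Rightarrow> real
    \<Rightarrow> policy \<Rightarrow> (nat \<Rightarrow> real) \<Rightarrow> nat \<Rightarrow> nat \<Rightarrow> real" where
  "softBellman R P \<gamma> lam \<pi> V s a =
     R s a + \<gamma> * measure_pmf.expectation (P s a) V - lam * ln (pmf (\<pi> s) a)"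

definition norm2mu :: "(nat \<times> nat) pmf \<Rightarrow> (nat \<Rightarrow> nat \<Rightarrow> real) \<Rightarrow> real" where
  "norm2mu \<mu> f = sqrt (measure_pmf.expectation \<mu> (\<lambda>(s, a). (f s a)\<^sup>2))"

definition eps_VP ::
  "(nat \<Rightarrow> nat \<Rightarrow> real) \<Rightarrow> (nat \<Rightarrow> nat \<Rightarrow> nat pmf) \<Rightarrow> real \<Rightarrow> real \<Rightarrow> (nat \<times> nat) pmf
    \<Rightarrow> (nat \<Rightarrow> real) set \<Rightarrow> policy set \<Rightarrow> real" where
  "eps_VP R P \<gamma> lam \<mu> VV PP =
     Min ((\<lambda>(V, \<pi>). (norm2mu \<mu> (\<lambda>s a. V s - softBellman R P \<gamma> lam \<pi> V s a))\<^sup>2) ` (VV \<times> PP))"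

definition eps_GVP ::
  "(nat \<Rightarrow> nat \<Rightarrow> real) \<Rightarrow> (nat \<Rightarrow> nat \<Rightarrow> nat pmf) \<Rightarrow> real \<Rightarrow> real \<Rightarrow> (nat \<times> nat) pmf
    \<Rightarrow> (nat \<Rightarrow> nat \<Rightarrow> real) set \<Rightarrow> (nat \<Rightarrow> real) set \<Rightarrow> policy set \<Rightarrow> real" where
  "eps_GVP R P \<gamma> lam \<mu> GG VV PP =
     Max ((\<lambda>(V, \<pi>). Min ((\<lambda>g. (norm2mu \<mu> (\<lambda>s a. g s a - softBellman R P \<gamma> lam \<pi> V s a))\<^sup>2) ` GG))
          ` (VV \<times> PP))"

definition lossL ::
  "(nat \<Rightarrow> nat \<Rightarrow> real) \<Rightarrow> real \<Rightarrow> real \<Rightarrow> nat \<Rightarrow> (nat \<Rightarrow> nat \<times> nat \<times> nat)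
    \<Rightarrow> (nat \<Rightarrow> real) \<Rightarrow> policy \<Rightarrow> real" where
  "lossL R \<gamma> lam n D V \<pi> =
     (1 / real n) * (\<Sum>i<n. case D i of (s, a, s') \<Rightarrow>
        (V s - R s a - \<gamma> * V s' + lam * ln (pmf (\<pi> s) a))\<^sup>2)"

definition lossR ::
  "(nat \<Rightarrow> nat \<Rightarrow> real) \<Rightarrow> real \<Rightarrow> real \<Rightarrow> nat \<Rightarrow> (nat \<Rightarrow> nat \<times> nat \<times> nat)
    \<Rightarrow> (nat \<Rightarrow> nat \<Rightarrow> real) \<Rightarrow> (nat \<Rightarrow> real) \<Rightarrow> policy \<Rightarrow> real" where
  "lossR R \<gamma> lam n D g V \<pi> =
     (1 / real n) * (\<Sum>i<n. case D i of (s, a, s') \<Rightarrow>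
        (g s a - R s a - \<gamma> * V s' + lam * ln (pmf (\<pi> s) a))\<^sup>2)"

definition sbeedObj ::
  "(nat \<Rightarrow> nat \<Rightarrow> real) \<Rightarrow> real \<Rightarrow> real \<Rightarrow> nat \<Rightarrow> (nat \<Rightarrow> nat \<times> nat \<times> nat)
    \<Rightarrow> (nat \<Rightarrow> nat \<Rightarrow> real) set \<Rightarrow> (nat \<Rightarrow> real) \<Rightarrow> policy \<Rightarrow> real" where
  "sbeedObj R \<gamma> lam n D GG V \<pi> =
     Max ((\<lambda>g. lossL R \<gamma> lam n D V \<pi> - lossR R \<gamma> lam n D g V \<pi>) ` GG)"

definition sbeedOutputs ::
  "(nat \<Rightarrow> nat \<Rightarrow> real) \<Rightarrow> real \<Rightarrow> real \<Rightarrow> nat \<Rightarrow> (nat \<Rightarrow> nat \<times> nat \<times> nat)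
    \<Rightarrow> (nat \<Rightarrow> real) set \<Rightarrow> policy set \<Rightarrow> (nat \<Rightarrow> nat \<Rightarrow> real) set
    \<Rightarrow> ((nat \<Rightarrow> real) \<times> policy) set" where
  "sbeedOutputs R \<gamma> lam n D VV PP GG =
     {(V, \<pi>) \<in> VV \<times> PP. \<forall>V'\<in>VV. \<forall>\<pi>'\<in>PP.
        sbeedObj R \<gamma> lam n D GG V \<pi> \<le> sbeedObj R \<gamma> lam n D GG V' \<pi>'}"

definition samplePmf :: "(nat \<times> nat) pmf \<Rightarrow> (nat \<Rightarrow> nat \<Rightarrow> nat pmf) \<Rightarrow> (nat \<times> nat \<times> nat) pmf" where
  "samplePmf \<mu> P = bind_pmf \<mu> (\<lambda>(s, a). map_pmf (\<lambda>s'. (s, a, s')) (P s a))"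

definition datasetPmf :: "nat \<Rightarrow> (nat \<times> nat) pmf \<Rightarrow> (nat \<Rightarrow> nat \<Rightarrow> nat pmf)
    \<Rightarrow> (nat \<Rightarrow> nat \<times> nat \<times> nat) pmf" where
  "datasetPmf n \<mu> P = Pi_pmf {..<n} (0, 0, 0) (\<lambda>_. samplePmf \<mu> P)"

end

theory Submission
  imports Defs
begin

(* Write C for the soft Bellman operator of the policy at hand.  For fixed V, \<pi>, g the SBEED
   objective term L(V; V, \<pi>) - R(g; V, \<pi>) is an empirical mean of i.i.d. per-sample gaps
   (V s - Y)^2 - (g s a - Y)^2 with Y = r + \<gamma> V s' - \<lambda> ln \<pi>(a|s).  The gap is affine in Y and
   E[Y | s, a] = C V (s, a), so its mean is \<parallel>V - C V\<parallel>^2 - \<parallel>g - C V\<parallel>^2; it factors as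
   (V s - g s a)(V s + g s a - 2 Y), so its variance is O(Vmax^2 (\<parallel>V - C V\<parallel> + \<parallel>g - C V\<parallel>)^2).
   Bernstein's inequality and a union bound over V \<times> P \<times> G bound all deviations by
   12 \<rho> (\<parallel>V - C V\<parallel> + \<parallel>g - C V\<parallel>) + 16 \<rho>^2, \<rho> = sqrt (\<iota> / n), with probability 1 - 2 \<delta>.
   On that event, comparing the objective of an output (V', \<pi>') at its best-fitting critic with
   the objective of a minimiser of \<parallel>V - C V\<parallel> over V \<times> P at its maximising critic gives a
   quadratic inequality whose solution is \<parallel>V' - C V'\<parallel> \<le> 21 \<rho> + sqrt \<epsilon>_VP + sqrt \<epsilon>_GVP. *)

lemma exp_le_one_plus_x_plus_square:
  fixes x :: real
  assumes "\<bar>x\<bar> \<le> 1"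
  shows "exp x \<le> 1 + x + x\<^sup>2"
proof (cases "x \<ge> 0")
  case True
  then show ?thesis using assms exp_bound by auto
next
  case False
  define y where "y = - x"
  have y: "y > 0" using False by (simp add: y_def)
  have "exp (- y) \<le> 1 / (1 + y)"
    using exp_ge_add_one_self[of y] y by (simp add: exp_minus field_simps)
  also have "\<dots> \<le> 1 - y + y\<^sup>2"
    using y by (simp add: field_simps power2_eq_square)
  finally show ?thesis by (simp add: y_def)
qed

lemma finite_set_Pi_pmf:
  assumes "finite I" "finite (set_pmf q)"
  shows "finite (set_pmf (Pi_pmf I d (\<lambda>_. q)))"
  using assms by (subst set_Pi_pmf) (auto intro!: finite_PiE_dflt)

lemma prob_Pi_pmf_sum_gt_chernoff:
  fixes q :: "'a pmf" and h :: "'a \<Rightarrow> real"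
  assumes I: "finite I" and fin: "finite (set_pmf q)"
    and mean: "measure_pmf.expectation q h = 0"
    and bnd: "\<And>z. z \<in> set_pmf q \<Longrightarrow> \<bar>h z\<bar> \<le> b"
    and var: "measure_pmf.expectation q (\<lambda>z. (h z)\<^sup>2) \<le> v"
    and t: "t > 0" "t * b \<le> 1"
  shows "measure_pmf.prob (Pi_pmf I d (\<lambda>_. q)) {D. (\<Sum>i\<in>I. h (D i)) > c}
           \<le> exp (real (card I) * t\<^sup>2 * v - t * c)"
proof -
  let ?Q = "Pi_pmf I d (\<lambda>_. q)"
  let ?F = "\<lambda>D. exp (- t * c) * (\<Prod>i\<in>I. exp (t * h (D i)))"
  have F_eq: "?F D = exp (t * (\<Sum>i\<in>I. h (D i)) - t * c)" for D
    using I by (simp add: exp_sum[symmetric] sum_distrib_left exp_diff exp_minus field_simps)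
  have indicator_le: "indicator {D. (\<Sum>i\<in>I. h (D i)) > c} D \<le> ?F D" for D
  proof (cases "(\<Sum>i\<in>I. h (D i)) > c")
    case True
    then have "t * c \<le> t * (\<Sum>i\<in>I. h (D i))" using t by simp
    then show ?thesis by (subst F_eq) (simp add: True)
  qed (simp add: prod_nonneg)
  have mgf: "measure_pmf.expectation q (\<lambda>z. exp (t * h z)) \<le> exp (t\<^sup>2 * v)"
  proof -
    have "measure_pmf.expectation q (\<lambda>z. exp (t * h z))
        \<le> measure_pmf.expectation q (\<lambda>z. 1 + t * h z + t\<^sup>2 * (h z)\<^sup>2)"
    proof (intro integral_mono_AE integrable_measure_pmf_finite fin AE_pmfI)
      fix z assume "z \<in> set_pmf q"
      then have "\<bar>t * h z\<bar> \<le> t * b"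
        using bnd[of z] t by (simp add: abs_mult mult_left_mono)
      then have "\<bar>t * h z\<bar> \<le> 1"
        using t by linarith
      then show "exp (t * h z) \<le> 1 + t * h z + t\<^sup>2 * (h z)\<^sup>2"
        using exp_le_one_plus_x_plus_square[of "t * h z"] by (simp add: power_mult_distrib)
    qed
    also have "\<dots> = 1 + t\<^sup>2 * measure_pmf.expectation q (\<lambda>z. (h z)\<^sup>2)"
      using fin mean by (simp add: integrable_measure_pmf_finite)
    also have "\<dots> \<le> 1 + t\<^sup>2 * v"
      using var by (simp add: mult_left_mono)
    also have "\<dots> \<le> exp (t\<^sup>2 * v)"
      by (rule exp_ge_add_one_self)
    finally show ?thesis .
  qed
  have "measure_pmf.prob ?Q {D. (\<Sum>i\<in>I. h (D i)) > c}
      = measure_pmf.expectation ?Q (indicator {D. (\<Sum>i\<in>I. h (D i)) > c})"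
    by simp
  also have "\<dots> \<le> measure_pmf.expectation ?Q ?F"
    by (intro integral_mono integrable_measure_pmf_finite finite_set_Pi_pmf I fin indicator_le)
  also have "\<dots> = exp (- t * c) * (\<Prod>i\<in>I. measure_pmf.expectation q (\<lambda>z. exp (t * h z)))"
    using I fin
    by (simp only: integral_mult_right_zero, subst expectation_prod_Pi_pmf)
      (auto intro: integrable_measure_pmf_finite)
  also have "\<dots> \<le> exp (- t * c) * exp (t\<^sup>2 * v) ^ card I"
    using mgf by (simp add: power_mono integral_nonneg_AE)
  also have "\<dots> = exp (real (card I) * t\<^sup>2 * v - t * c)"
    by (simp add: exp_of_nat_mult[symmetric] exp_add[symmetric] mult.assoc)
  finally show ?thesis .
qed

lemma prob_Pi_pmf_sum_gt_bernstein:
  fixes q :: "'a pmf" and h :: "'a \<Rightarrow> real" and b \<sigma> u :: real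
  assumes I: "finite I" and fin: "finite (set_pmf q)"
    and mean: "measure_pmf.expectation q h = 0"
    and bnd: "\<And>z. z \<in> set_pmf q \<Longrightarrow> \<bar>h z\<bar> \<le> b"
    and var: "measure_pmf.expectation q (\<lambda>z. (h z)\<^sup>2) \<le> \<sigma>\<^sup>2"
    and \<sigma>: "\<sigma> \<ge> 0" and u: "u > 0"
  shows "measure_pmf.prob (Pi_pmf I d (\<lambda>_. q))
           {D. (\<Sum>i\<in>I. h (D i)) > 2 * \<sigma> * sqrt (u * real (card I)) + 2 * b * u} \<le> exp (- u)"
proof -
  define k where "k = sqrt (u * real (card I))"
  define r where "r = \<sigma> * k + b * u"
  obtain z where "z \<in> set_pmf q" using set_pmf_not_empty[of q] by blast
  then have b: "b \<ge> 0" using bnd[of z] by linarith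
  have k: "k \<ge> 0" "k\<^sup>2 = u * real (card I)" using u by (simp_all add: k_def)
  have threshold: "2 * \<sigma> * sqrt (u * real (card I)) + 2 * b * u = 2 * r"
    by (simp add: r_def k_def algebra_simps)
  show ?thesis
  proof (cases "r = 0")
    case True
    then have "b * u = 0" using \<sigma> b u k by (simp add: r_def add_nonneg_eq_0_iff)
    then have "b = 0" using u by simp
    then have "\<forall>D \<in> set_pmf (Pi_pmf I d (\<lambda>_. q)). (\<Sum>i\<in>I. h (D i)) = 0"
      using bnd I by (auto simp: set_Pi_pmf PiE_dflt_def intro!: sum.neutral)
    then have "measure_pmf.prob (Pi_pmf I d (\<lambda>_. q)) {D. (\<Sum>i\<in>I. h (D i)) > 2 * r} = 0"
      using True by (auto simp: measure_pmf_zero_iff)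
    then show ?thesis by (simp add: threshold)
  next
    case False
    moreover have "r \<ge> 0" using \<sigma> b u k by (simp add: r_def)
    ultimately have r: "r > 0" by simp
    \<comment> \<open>The Chernoff parameter \<open>t = u / r\<close> is admissible since \<open>b u \<le> r\<close>, and it
      balances both terms since \<open>\<sigma>\<^sup>2 u card I \<le> r\<^sup>2\<close>.\<close>
    define t where "t = u / r"
    have t: "t > 0" "t * b \<le> 1"
      using r u \<sigma> k by (auto simp: t_def r_def field_simps)
    have "u * real (card I) * \<sigma>\<^sup>2 \<le> r\<^sup>2"
      using power_mono[of "\<sigma> * k" r 2] \<sigma> k b u by (simp add: r_def power_mult_distrib mult.commute)
    then have "u * real (card I) * \<sigma>\<^sup>2 / r\<^sup>2 \<le> 1"
      using r by simp
    then have "u * (u * real (card I) * \<sigma>\<^sup>2 / r\<^sup>2) \<le> u"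
      using u by (intro mult_left_le) auto
    also have "u * (u * real (card I) * \<sigma>\<^sup>2 / r\<^sup>2) = real (card I) * t\<^sup>2 * \<sigma>\<^sup>2"
      by (simp add: t_def power_divide power2_eq_square)
    finally have "real (card I) * t\<^sup>2 * \<sigma>\<^sup>2 \<le> u" .
    moreover have "t * (2 * r) = 2 * u" using r by (simp add: t_def)
    ultimately have "exp (real (card I) * t\<^sup>2 * \<sigma>\<^sup>2 - t * (2 * r)) \<le> exp (- u)"
      by simp
    with prob_Pi_pmf_sum_gt_chernoff[OF I fin mean bnd var t, of d "2 * r"] show ?thesis
      unfolding threshold by linarith
  qed
qed

lemma prob_Pi_pmf_abs_sum_gt_bernstein:
  fixes q :: "'a pmf" and h :: "'a \<Rightarrow> real" and b \<sigma> u :: real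
  assumes I: "finite I" and fin: "finite (set_pmf q)"
    and mean: "measure_pmf.expectation q h = 0"
    and bnd: "\<And>z. z \<in> set_pmf q \<Longrightarrow> \<bar>h z\<bar> \<le> b"
    and var: "measure_pmf.expectation q (\<lambda>z. (h z)\<^sup>2) \<le> \<sigma>\<^sup>2"
    and \<sigma>: "\<sigma> \<ge> 0" and u: "u > 0"
  shows "measure_pmf.prob (Pi_pmf I d (\<lambda>_. q))
           {D. \<bar>\<Sum>i\<in>I. h (D i)\<bar> > 2 * \<sigma> * sqrt (u * real (card I)) + 2 * b * u} \<le> 2 * exp (- u)"
proof -
  let ?Q = "Pi_pmf I d (\<lambda>_. q)" and ?c = "2 * \<sigma> * sqrt (u * real (card I)) + 2 * b * u"
  have "measure_pmf.prob ?Q {D. \<bar>\<Sum>i\<in>I. h (D i)\<bar> > ?c}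
      \<le> measure_pmf.prob ?Q ({D. (\<Sum>i\<in>I. h (D i)) > ?c} \<union> {D. (\<Sum>i\<in>I. - h (D i)) > ?c})"
    by (intro measure_pmf.finite_measure_mono) (auto simp: sum_negf abs_if)
  also have "\<dots> \<le> measure_pmf.prob ?Q {D. (\<Sum>i\<in>I. h (D i)) > ?c}
      + measure_pmf.prob ?Q {D. (\<Sum>i\<in>I. - h (D i)) > ?c}"
    by (rule measure_Un_le) auto
  also have "\<dots> \<le> exp (- u) + exp (- u)"
    using assms by (intro add_mono prob_Pi_pmf_sum_gt_bernstein) auto
  finally show ?thesis by simp
qed

lemma diff_squares_bounds:
  fixes x y w M :: real
  assumes "0 \<le> x" "x \<le> 2 * M" "0 \<le> y" "y \<le> 2 * M" "0 \<le> w" "w \<le> 2 * M"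
  shows "\<bar>(x - w)\<^sup>2 - (y - w)\<^sup>2\<bar> \<le> 4 * M\<^sup>2"
    and "((x - w)\<^sup>2 - (y - w)\<^sup>2)\<^sup>2 \<le> 16 * M\<^sup>2 * (x - y)\<^sup>2"
proof -
  have "(x - w)\<^sup>2 \<le> (2 * M)\<^sup>2" "(y - w)\<^sup>2 \<le> (2 * M)\<^sup>2"
    using assms by (simp_all only: power2_le_iff_abs_le)
  moreover have "(2 * M)\<^sup>2 = 4 * M\<^sup>2" "0 \<le> (x - w)\<^sup>2" "0 \<le> (y - w)\<^sup>2"
    by (simp_all add: power_mult_distrib)
  ultimately show "\<bar>(x - w)\<^sup>2 - (y - w)\<^sup>2\<bar> \<le> 4 * M\<^sup>2"
    unfolding abs_le_iff by linarith
  have "(x + y - 2 * w)\<^sup>2 \<le> (4 * M)\<^sup>2"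
    using assms by (simp only: power2_le_iff_abs_le)
  then have "(x - y)\<^sup>2 * (x + y - 2 * w)\<^sup>2 \<le> (x - y)\<^sup>2 * (4 * M)\<^sup>2"
    by (intro mult_left_mono) auto
  moreover have "((x - w)\<^sup>2 - (y - w)\<^sup>2)\<^sup>2 = (x - y)\<^sup>2 * (x + y - 2 * w)\<^sup>2"
    by (simp add: power2_eq_square algebra_simps)
  ultimately show "((x - w)\<^sup>2 - (y - w)\<^sup>2)\<^sup>2 \<le> 16 * M\<^sup>2 * (x - y)\<^sup>2"
    by (simp add: power_mult_distrib mult.commute)
qed

lemma le_of_perturbed_square_gap:
  fixes x a e e' r :: real
  assumes "0 \<le> x" "0 \<le> a" "0 \<le> e" "0 \<le> r"
    and "x\<^sup>2 - e\<^sup>2 - (12 * r * (x + e) + 16 * r\<^sup>2) \<le> a\<^sup>2 - e'\<^sup>2 + (12 * r * (a + e') + 16 * r\<^sup>2)"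
  shows "x \<le> 21 * r + a + e"
proof (rule ccontr)
  define M where "M = a + e + 9 * r"
  assume "\<not> x \<le> 21 * r + a + e"
  then have "M < x" "M < x - 12 * r" "M \<ge> 0" using assms by (auto simp: M_def)
  then have "M * M < x * (x - 12 * r)"
    by (intro mult_strict_mono) auto
  moreover have "x * (x - 12 * r) \<le> M * M"
  proof -
    have "0 \<le> a * e" "0 \<le> a * r" "0 \<le> e * r" "0 \<le> r * r" "0 \<le> (e' - 6 * r)\<^sup>2"
      using assms by simp_all
    then show ?thesis
      using assms(5) unfolding M_def power2_eq_square by (simp only: algebra_simps)
  qed
  ultimately show False by simp
qed

definition sample_target ::
  "(nat \<Rightarrow> nat \<Rightarrow> real) \<Rightarrow> real \<Rightarrow> real \<Rightarrow> (nat \<Rightarrow> real) \<Rightarrow> policy \<Rightarrow> nat \<times> nat \<times> nat \<Rightarrow> real" where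
  "sample_target R \<gamma> lam V \<pi> z = (case z of (s, a, s') \<Rightarrow> R s a + \<gamma> * V s' - lam * ln (pmf (\<pi> s) a))"

definition loss_gap_sample ::
  "(nat \<Rightarrow> nat \<Rightarrow> real) \<Rightarrow> real \<Rightarrow> real \<Rightarrow> (nat \<Rightarrow> real) \<Rightarrow> policy \<Rightarrow> (nat \<Rightarrow> nat \<Rightarrow> real)
    \<Rightarrow> nat \<times> nat \<times> nat \<Rightarrow> real" where
  "loss_gap_sample R \<gamma> lam V \<pi> g z = (case z of (s, a, _) \<Rightarrow>
     (V s - sample_target R \<gamma> lam V \<pi> z)\<^sup>2 - (g s a - sample_target R \<gamma> lam V \<pi> z)\<^sup>2)"

lemma lossL_minus_lossR:
  "lossL R \<gamma> lam n D V \<pi> - lossR R \<gamma> lam n D g V \<pi>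
     = (\<Sum>i<n. loss_gap_sample R \<gamma> lam V \<pi> g (D i)) / real n"
proof -
  have "lossL R \<gamma> lam n D V \<pi> - lossR R \<gamma> lam n D g V \<pi>
      = (\<Sum>i<n. (case D i of (s, a, s') \<Rightarrow> (V s - R s a - \<gamma> * V s' + lam * ln (pmf (\<pi> s) a))\<^sup>2)
           - (case D i of (s, a, s') \<Rightarrow> (g s a - R s a - \<gamma> * V s' + lam * ln (pmf (\<pi> s) a))\<^sup>2))
         / real n"
    unfolding lossL_def lossR_def sum_subtractf diff_divide_distrib by simp
  also have "\<dots> = (\<Sum>i<n. loss_gap_sample R \<gamma> lam V \<pi> g (D i)) / real n"
    by (intro arg_cong[where f = "\<lambda>x. x / real n"] sum.cong)
      (auto simp: loss_gap_sample_def sample_target_def algebra_simps split: prod.splits)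
  finally show ?thesis .
qed

lemma norm2mu_nonneg: "norm2mu \<mu> f \<ge> 0"
  unfolding norm2mu_def by (auto intro!: integral_nonneg_AE AE_pmfI)

lemma norm2mu_square: "(norm2mu \<mu> f)\<^sup>2 = measure_pmf.expectation \<mu> (\<lambda>(s, a). (f s a)\<^sup>2)"
  unfolding norm2mu_def by (simp add: integral_nonneg_AE AE_pmfI case_prod_beta)

lemma eps_VP_attained:
  assumes "finite VV" "VV \<noteq> {}" "finite PP" "PP \<noteq> {}"
  obtains V \<pi> where "V \<in> VV" "\<pi> \<in> PP"
    and "eps_VP R P \<gamma> lam \<mu> VV PP = (norm2mu \<mu> (\<lambda>s a. V s - softBellman R P \<gamma> lam \<pi> V s a))\<^sup>2"
proof -
  have "eps_VP R P \<gamma> lam \<mu> VV PP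
      \<in> (\<lambda>(V, \<pi>). (norm2mu \<mu> (\<lambda>s a. V s - softBellman R P \<gamma> lam \<pi> V s a))\<^sup>2) ` (VV \<times> PP)"
    unfolding eps_VP_def using assms by (intro Min_in) auto
  then show ?thesis using that by auto
qed

lemma eps_GVP_ge_best_fit:
  assumes "finite VV" "finite PP" "finite GG" "GG \<noteq> {}" "V \<in> VV" "\<pi> \<in> PP"
  obtains g where "g \<in> GG"
    and "(norm2mu \<mu> (\<lambda>s a. g s a - softBellman R P \<gamma> lam \<pi> V s a))\<^sup>2 \<le> eps_GVP R P \<gamma> lam \<mu> GG VV PP"
proof -
  let ?fit = "\<lambda>V \<pi>. Min ((\<lambda>g. (norm2mu \<mu> (\<lambda>s a. g s a - softBellman R P \<gamma> lam \<pi> V s a))\<^sup>2) ` GG)"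
  have "?fit V \<pi> \<in> (\<lambda>g. (norm2mu \<mu> (\<lambda>s a. g s a - softBellman R P \<gamma> lam \<pi> V s a))\<^sup>2) ` GG"
    using assms by (intro Min_in) auto
  moreover have "?fit V \<pi> \<le> eps_GVP R P \<gamma> lam \<mu> GG VV PP"
    unfolding eps_GVP_def using assms by (intro Max_ge) auto
  ultimately show ?thesis using that by auto
qed

lemma eps_VP_nonneg:
  assumes "finite VV" "VV \<noteq> {}" "finite PP" "PP \<noteq> {}"
  shows "eps_VP R P \<gamma> lam \<mu> VV PP \<ge> 0"
proof -
  obtain V \<pi> where "eps_VP R P \<gamma> lam \<mu> VV PP = (norm2mu \<mu> (\<lambda>s a. V s - softBellman R P \<gamma> lam \<pi> V s a))\<^sup>2"
    using eps_VP_attained[OF assms] .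
  then show ?thesis by simp
qed

lemma eps_GVP_nonneg:
  assumes "finite VV" "VV \<noteq> {}" "finite PP" "PP \<noteq> {}" "finite GG" "GG \<noteq> {}"
  shows "eps_GVP R P \<gamma> lam \<mu> GG VV PP \<ge> 0"
proof -
  obtain V \<pi> where "V \<in> VV" "\<pi> \<in> PP" using assms by blast
  then obtain g where "(norm2mu \<mu> (\<lambda>s a. g s a - softBellman R P \<gamma> lam \<pi> V s a))\<^sup>2
      \<le> eps_GVP R P \<gamma> lam \<mu> GG VV PP"
    using eps_GVP_ge_best_fit[OF assms(1,3,5,6)] by blast
  then show ?thesis by (meson order.trans zero_le_power2)
qed

lemma scaled_ln_ratio_nonneg:
  fixes N \<delta> M :: real
  assumes "N \<ge> 1" "0 < \<delta>" "\<delta> < 1"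
  shows "0 \<le> M\<^sup>2 * ln (N / \<delta>)"
  using assms by (simp add: ln_ge_zero le_divide_eq_1_pos)

locale sbeed_problem =
  fixes S A :: "nat set" and P :: "nat \<Rightarrow> nat \<Rightarrow> nat pmf" and R :: "nat \<Rightarrow> nat \<Rightarrow> real"
    and Rmax \<gamma> lam :: real and \<mu> :: "(nat \<times> nat) pmf"
    and VV :: "(nat \<Rightarrow> real) set" and PP :: "policy set" and GG :: "(nat \<Rightarrow> nat \<Rightarrow> real) set"
  assumes finite_S: "finite S" and S_nonempty: "S \<noteq> {}"
    and finite_A: "finite A" and A_nonempty: "A \<noteq> {}"
    and P_closed: "\<forall>s\<in>S. \<forall>a\<in>A. set_pmf (P s a) \<subseteq> S"
    and R_bounded: "\<forall>s\<in>S. \<forall>a\<in>A. 0 \<le> R s a \<and> R s a \<le> Rmax"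
    and \<gamma>_nonneg: "0 \<le> \<gamma>" and \<gamma>_less_1: "\<gamma> < 1" and lam_pos: "lam > 0"
    and set_\<mu>: "set_pmf \<mu> \<subseteq> S \<times> A"
    and finite_VV: "finite VV" and VV_nonempty: "VV \<noteq> {}"
    and finite_PP: "finite PP" and PP_nonempty: "PP \<noteq> {}"
    and finite_GG: "finite GG" and GG_nonempty: "GG \<noteq> {}"
    and VV_bounded: "\<forall>V\<in>VV. \<forall>s\<in>S. 0 \<le> V s \<and> V s \<le> Vlmax \<gamma> Rmax lam A"
    and PP_bounded: "\<forall>\<pi>\<in>PP. \<forall>s\<in>S. set_pmf (\<pi> s) \<subseteq> A \<and>
        (\<forall>a\<in>A. pmf (\<pi> s) a > 0 \<and> \<bar>ln (pmf (\<pi> s) a)\<bar> \<le> Vlmax \<gamma> Rmax lam A / lam)"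
    and GG_bounded: "\<forall>g\<in>GG. \<forall>s\<in>S. \<forall>a\<in>A. 0 \<le> g s a \<and> g s a \<le> 2 * Vlmax \<gamma> Rmax lam A"
begin

abbreviation "Vm \<equiv> Vlmax \<gamma> Rmax lam A"
abbreviation "sample \<equiv> samplePmf \<mu> P"
abbreviation "bellman_error V \<pi> \<equiv> norm2mu \<mu> (\<lambda>s a. V s - softBellman R P \<gamma> lam \<pi> V s a)"
abbreviation "dual_error g V \<pi> \<equiv> norm2mu \<mu> (\<lambda>s a. g s a - softBellman R P \<gamma> lam \<pi> V s a)"
abbreviation "loss_gap V \<pi> g \<equiv> loss_gap_sample R \<gamma> lam V \<pi> g"
abbreviation "empirical_gap n D V \<pi> g \<equiv> lossL R \<gamma> lam n D V \<pi> - lossR R \<gamma> lam n D g V \<pi>"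
abbreviation "gap_tolerance \<rho> V \<pi> g \<equiv> 12 * \<rho> * (bellman_error V \<pi> + dual_error g V \<pi>) + 16 * \<rho>\<^sup>2"

lemma Vm_nonneg: "Vm \<ge> 0" and Rmax_le_Vm: "Rmax \<le> (1 - \<gamma>) * Vm"
proof -
  obtain s a where "s \<in> S" "a \<in> A" using S_nonempty A_nonempty by blast
  then have "Rmax \<ge> 0" using R_bounded by force
  moreover have "ln (real (card A)) \<ge> 0"
    using finite_A A_nonempty by (simp add: Suc_le_eq card_gt_0_iff)
  moreover have "(1 - \<gamma>) * Vm = Rmax + lam * ln (real (card A))"
    using \<gamma>_less_1 by (simp add: Vlmax_def)
  ultimately show "Vm \<ge> 0" "Rmax \<le> (1 - \<gamma>) * Vm"
    using lam_pos \<gamma>_less_1 by (simp_all add: Vlmax_def)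
qed

lemma card_classes_ge_1:
  "real (card VV) * real (card PP) \<ge> 1" "real (card VV) * real (card PP) * real (card GG) \<ge> 1"
proof -
  have "real (card VV) \<ge> 1" "real (card PP) \<ge> 1" "real (card GG) \<ge> 1"
    using finite_VV finite_PP finite_GG VV_nonempty PP_nonempty GG_nonempty
    by (simp_all add: Suc_le_eq card_gt_0_iff)
  then show "real (card VV) * real (card PP) \<ge> 1" "real (card VV) * real (card PP) * real (card GG) \<ge> 1"
    by (simp_all add: mult_ge1_I)
qed

lemma set_sample:
  assumes "z \<in> set_pmf sample"
  obtains s a s' where "z = (s, a, s')" "(s, a) \<in> set_pmf \<mu>" "s' \<in> set_pmf (P s a)"
    and "s \<in> S" "a \<in> A" "s' \<in> S"
  using assms set_\<mu> P_closed unfolding samplePmf_def by fastforce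

lemma finite_set_P: "(s, a) \<in> set_pmf \<mu> \<Longrightarrow> finite (set_pmf (P s a))"
  using set_\<mu> P_closed finite_S by (meson SigmaD1 SigmaD2 finite_subset subsetD)

lemma finite_set_\<mu>: "finite (set_pmf \<mu>)"
  using set_\<mu> finite_S finite_A by (meson finite_SigmaI finite_subset)

lemma finite_set_sample: "finite (set_pmf sample)"
proof (rule finite_subset)
  show "set_pmf sample \<subseteq> (\<Union>(s, a)\<in>set_pmf \<mu>. Pair s ` Pair a ` set_pmf (P s a))"
    by (auto elim!: set_sample)
  show "finite (\<Union>(s, a)\<in>set_pmf \<mu>. Pair s ` Pair a ` set_pmf (P s a))"
    using finite_set_\<mu> finite_set_P by auto
qed

lemma expectation_sample:
  fixes f :: "nat \<times> nat \<times> nat \<Rightarrow> real"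
  shows "measure_pmf.expectation sample f
     = measure_pmf.expectation \<mu> (\<lambda>(s, a). measure_pmf.expectation (P s a) (\<lambda>s'. f (s, a, s')))"
proof -
  have "measure_pmf.expectation sample f
      = (\<Sum>x\<in>set_pmf \<mu>. pmf \<mu> x *\<^sub>R measure_pmf.expectation (case x of (s, a) \<Rightarrow> map_pmf (\<lambda>s'. (s, a, s')) (P s a)) f)"
    unfolding samplePmf_def
    by (rule pmf_expectation_bind[where A = "set_pmf \<mu>" and p = \<mu> and h = f
          and f = "\<lambda>(s, a). map_pmf (\<lambda>s'. (s, a, s')) (P s a)", OF finite_set_\<mu>])
      (auto simp: finite_set_P)
  also have "\<dots> = measure_pmf.expectation \<mu> (\<lambda>(s, a). measure_pmf.expectation (P s a) (\<lambda>s'. f (s, a, s')))"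
    by (subst integral_measure_pmf[OF finite_set_\<mu>]) (auto intro!: sum.cong simp: mult.commute)
  finally show ?thesis .
qed

lemma sample_values_bounded:
  assumes "V \<in> VV" "\<pi> \<in> PP" "g \<in> GG" "(s, a, s') \<in> set_pmf sample"
  shows "0 \<le> V s" "V s \<le> 2 * Vm" "0 \<le> g s a" "g s a \<le> 2 * Vm"
    and "0 \<le> sample_target R \<gamma> lam V \<pi> (s, a, s')" "sample_target R \<gamma> lam V \<pi> (s, a, s') \<le> 2 * Vm"
proof -
  have sa: "s \<in> S" "a \<in> A" "s' \<in> S" using assms(4) by (auto elim: set_sample)
  then have R: "0 \<le> R s a" "R s a \<le> Rmax" using R_bounded by auto
  show "0 \<le> V s" "V s \<le> 2 * Vm" using VV_bounded assms(1) sa Vm_nonneg by force+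
  show "0 \<le> g s a" "g s a \<le> 2 * Vm" using GG_bounded assms(3) sa by auto
  have V': "0 \<le> \<gamma> * V s'" "\<gamma> * V s' \<le> \<gamma> * Vm"
    using VV_bounded assms(1) sa \<gamma>_nonneg by (auto intro: mult_left_mono)
  have p: "0 < pmf (\<pi> s) a" "\<bar>ln (pmf (\<pi> s) a)\<bar> \<le> Vm / lam"
    using PP_bounded assms(2) sa by auto
  then have "ln (pmf (\<pi> s) a) \<le> 0" using pmf_le_1 by simp
  then have "- lam * ln (pmf (\<pi> s) a) = lam * \<bar>ln (pmf (\<pi> s) a)\<bar>" by simp
  moreover have "lam * \<bar>ln (pmf (\<pi> s) a)\<bar> \<le> Vm" using p lam_pos by (simp add: field_simps)
  ultimately have "0 \<le> - lam * ln (pmf (\<pi> s) a)" "- lam * ln (pmf (\<pi> s) a) \<le> Vm"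
    using lam_pos by simp_all
  then show "0 \<le> sample_target R \<gamma> lam V \<pi> (s, a, s')" "sample_target R \<gamma> lam V \<pi> (s, a, s') \<le> 2 * Vm"
    using R V' Rmax_le_Vm by (auto simp: sample_target_def algebra_simps)
qed

lemma loss_gap_bounds:
  assumes "V \<in> VV" "\<pi> \<in> PP" "g \<in> GG" "(s, a, s') \<in> set_pmf sample"
  shows "\<bar>loss_gap V \<pi> g (s, a, s')\<bar> \<le> 4 * Vm\<^sup>2"
    and "(loss_gap V \<pi> g (s, a, s'))\<^sup>2 \<le> 16 * Vm\<^sup>2 * (V s - g s a)\<^sup>2"
  using diff_squares_bounds[OF sample_values_bounded(1-4)[OF assms] sample_values_bounded(5,6)[OF assms]]
  by (simp_all add: loss_gap_sample_def)

lemma expectation_sample_target: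
  assumes "(s, a) \<in> set_pmf \<mu>"
  shows "measure_pmf.expectation (P s a) (\<lambda>s'. sample_target R \<gamma> lam V \<pi> (s, a, s'))
           = softBellman R P \<gamma> lam \<pi> V s a"
  using finite_set_P[OF assms]
  by (simp add: sample_target_def softBellman_def integrable_measure_pmf_finite)

lemma expectation_loss_gap:
  "measure_pmf.expectation sample (loss_gap V \<pi> g) = (bellman_error V \<pi>)\<^sup>2 - (dual_error g V \<pi>)\<^sup>2"
proof -
  have affine: "loss_gap V \<pi> g (s, a, s')
      = (V s)\<^sup>2 - (g s a)\<^sup>2 - 2 * (V s - g s a) * sample_target R \<gamma> lam V \<pi> (s, a, s')" for s a s'
    by (simp add: loss_gap_sample_def power2_eq_square algebra_simps)
  have "measure_pmf.expectation (P s a) (\<lambda>s'. loss_gap V \<pi> g (s, a, s'))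
      = (V s - softBellman R P \<gamma> lam \<pi> V s a)\<^sup>2 - (g s a - softBellman R P \<gamma> lam \<pi> V s a)\<^sup>2"
    if "(s, a) \<in> set_pmf \<mu>" for s a
    using finite_set_P[OF that] expectation_sample_target[OF that, of V \<pi>]
    by (simp add: affine integrable_measure_pmf_finite power2_eq_square algebra_simps)
  then have "measure_pmf.expectation sample (loss_gap V \<pi> g)
      = measure_pmf.expectation \<mu> (\<lambda>(s, a). (V s - softBellman R P \<gamma> lam \<pi> V s a)\<^sup>2
                                        - (g s a - softBellman R P \<gamma> lam \<pi> V s a)\<^sup>2)"
    by (simp add: expectation_sample integral_cong_AE AE_pmfI split_beta)
  also have "\<dots> = (bellman_error V \<pi>)\<^sup>2 - (dual_error g V \<pi>)\<^sup>2"
    unfolding norm2mu_square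
    by (simp add: split_beta' integrable_measure_pmf_finite[OF finite_set_\<mu>])
  finally show ?thesis .
qed

lemma variance_loss_gap:
  assumes V: "V \<in> VV" and \<pi>: "\<pi> \<in> PP" and g: "g \<in> GG"
  shows "measure_pmf.expectation sample
           (\<lambda>z. (loss_gap V \<pi> g z - measure_pmf.expectation sample (loss_gap V \<pi> g))\<^sup>2)
         \<le> (6 * Vm * (bellman_error V \<pi> + dual_error g V \<pi>))\<^sup>2"
proof -
  let ?C = "softBellman R P \<gamma> lam \<pi> V"
  have integrable: "integrable (measure_pmf sample) f" for f :: "_ \<Rightarrow> real"
    using finite_set_sample by (rule integrable_measure_pmf_finite)
  have "measure_pmf.expectation sample
          (\<lambda>z. (loss_gap V \<pi> g z - measure_pmf.expectation sample (loss_gap V \<pi> g))\<^sup>2)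
      \<le> measure_pmf.expectation sample (\<lambda>z. (loss_gap V \<pi> g z)\<^sup>2)"
    by (simp add: measure_pmf.variance_eq integrable)
  also have "\<dots> \<le> measure_pmf.expectation sample (\<lambda>(s, a, s'). 16 * Vm\<^sup>2 * (V s - g s a)\<^sup>2)"
    by (intro integral_mono_AE integrable AE_pmfI) (auto split: prod.splits intro: loss_gap_bounds(2)[OF V \<pi> g])
  also have "\<dots> = measure_pmf.expectation \<mu> (\<lambda>(s, a). 16 * Vm\<^sup>2 * (V s - g s a)\<^sup>2)"
    by (simp add: expectation_sample split_beta')
  also have "\<dots> \<le> measure_pmf.expectation \<mu> (\<lambda>(s, a). 32 * Vm\<^sup>2 * ((V s - ?C s a)\<^sup>2 + (g s a - ?C s a)\<^sup>2))"
  proof (intro integral_mono_AE integrable_measure_pmf_finite finite_set_\<mu> AE_pmfI)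
    fix x :: "nat \<times> nat"
    obtain s a where x: "x = (s, a)" by fastforce
    have "(V s - g s a)\<^sup>2 \<le> 2 * ((V s - ?C s a)\<^sup>2 + (g s a - ?C s a)\<^sup>2)"
      using zero_le_power2[of "V s + g s a - 2 * ?C s a"] by (simp add: power2_eq_square algebra_simps)
    then have "16 * Vm\<^sup>2 * (V s - g s a)\<^sup>2 \<le> 16 * Vm\<^sup>2 * (2 * ((V s - ?C s a)\<^sup>2 + (g s a - ?C s a)\<^sup>2))"
      by (rule mult_left_mono) simp
    then show "(case x of (s, a) \<Rightarrow> 16 * Vm\<^sup>2 * (V s - g s a)\<^sup>2)
        \<le> (case x of (s, a) \<Rightarrow> 32 * Vm\<^sup>2 * ((V s - ?C s a)\<^sup>2 + (g s a - ?C s a)\<^sup>2))"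
      by (simp add: x algebra_simps)
  qed
  also have "\<dots> = 32 * Vm\<^sup>2 * ((bellman_error V \<pi>)\<^sup>2 + (dual_error g V \<pi>)\<^sup>2)"
    unfolding norm2mu_square
    by (simp add: split_beta' distrib_left integrable_measure_pmf_finite[OF finite_set_\<mu>])
  also have "\<dots> \<le> 36 * Vm\<^sup>2 * (bellman_error V \<pi> + dual_error g V \<pi>)\<^sup>2"
    using norm2mu_nonneg[of \<mu>] by (intro mult_mono) (auto simp: power2_sum)
  also have "\<dots> = (6 * Vm * (bellman_error V \<pi> + dual_error g V \<pi>))\<^sup>2"
    by (simp add: power_mult_distrib)
  finally show ?thesis .
qed

lemma centered_loss_gap_bounded:
  assumes V: "V \<in> VV" and \<pi>: "\<pi> \<in> PP" and g: "g \<in> GG" and z: "z \<in> set_pmf sample"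
  shows "\<bar>loss_gap V \<pi> g z - measure_pmf.expectation sample (loss_gap V \<pi> g)\<bar> \<le> 8 * Vm\<^sup>2"
proof -
  have bounded: "\<bar>loss_gap V \<pi> g z\<bar> \<le> 4 * Vm\<^sup>2" if "z \<in> set_pmf sample" for z
    using that loss_gap_bounds(1)[OF V \<pi> g] by (cases z) auto
  have "\<bar>measure_pmf.expectation sample (loss_gap V \<pi> g)\<bar>
      \<le> measure_pmf.expectation sample (\<lambda>z. \<bar>loss_gap V \<pi> g z\<bar>)"
    by (rule integral_abs_bound)
  also have "\<dots> \<le> measure_pmf.expectation sample (\<lambda>_. 4 * Vm\<^sup>2)"
    by (intro integral_mono_AE integrable_measure_pmf_finite finite_set_sample AE_pmfI bounded)
  finally show ?thesis
    using bounded[OF z] by simp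
qed

lemma empirical_gap_deviation_eq:
  assumes "n > 0"
  shows "empirical_gap n D V \<pi> g - ((bellman_error V \<pi>)\<^sup>2 - (dual_error g V \<pi>)\<^sup>2)
     = (\<Sum>i<n. loss_gap V \<pi> g (D i) - measure_pmf.expectation sample (loss_gap V \<pi> g)) / real n"
  using assms by (simp add: lossL_minus_lossR expectation_loss_gap sum_subtractf diff_divide_distrib)

lemma prob_loss_gap_deviation:
  assumes V: "V \<in> VV" and \<pi>: "\<pi> \<in> PP" and g: "g \<in> GG" and u: "u > 0" and n: "n > 0"
  defines "\<rho> \<equiv> Vm * sqrt (u / real n)"
  shows "measure_pmf.prob (datasetPmf n \<mu> P)
           {D. \<bar>empirical_gap n D V \<pi> g - ((bellman_error V \<pi>)\<^sup>2 - (dual_error g V \<pi>)\<^sup>2)\<bar>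
               > gap_tolerance \<rho> V \<pi> g}
         \<le> 2 * exp (- u)"
proof -
  define \<sigma> where "\<sigma> = 6 * Vm * (bellman_error V \<pi> + dual_error g V \<pi>)"
  let ?h = "\<lambda>z. loss_gap V \<pi> g z - measure_pmf.expectation sample (loss_gap V \<pi> g)"
  let ?c = "2 * \<sigma> * sqrt (u * real (card {..<n})) + 2 * (8 * Vm\<^sup>2) * u"
  have mean: "measure_pmf.expectation sample ?h = 0"
    using finite_set_sample by (simp add: integrable_measure_pmf_finite)
  have \<sigma>: "\<sigma> \<ge> 0"
    using Vm_nonneg norm2mu_nonneg[of \<mu>] by (simp add: \<sigma>_def)
  have "real n * gap_tolerance \<rho> V \<pi> g
      = 12 * Vm * (bellman_error V \<pi> + dual_error g V \<pi>) * (real n * sqrt (u / real n))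
        + 16 * Vm\<^sup>2 * (real n * (sqrt (u / real n))\<^sup>2)"
    by (simp add: \<rho>_def power_mult_distrib algebra_simps)
  also have "real n * sqrt (u / real n) = sqrt (u * real n)"
    using n u by (simp add: real_sqrt_divide real_sqrt_mult field_simps)
  also have "real n * (sqrt (u / real n))\<^sup>2 = u"
    using n u by simp
  finally have threshold: "real n * gap_tolerance \<rho> V \<pi> g = ?c"
    by (simp add: \<sigma>_def)
  have "\<bar>\<Sum>i\<in>{..<n}. ?h (D i)\<bar> > ?c"
    if "\<bar>empirical_gap n D V \<pi> g - ((bellman_error V \<pi>)\<^sup>2 - (dual_error g V \<pi>)\<^sup>2)\<bar>
        > gap_tolerance \<rho> V \<pi> g" for D
  proof -
    have "real n * gap_tolerance \<rho> V \<pi> g < \<bar>\<Sum>i<n. ?h (D i)\<bar>"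
      using that n by (simp add: empirical_gap_deviation_eq abs_divide pos_less_divide_eq mult.commute)
    then show ?thesis
      unfolding threshold by simp
  qed
  then have "measure_pmf.prob (datasetPmf n \<mu> P)
          {D. \<bar>empirical_gap n D V \<pi> g - ((bellman_error V \<pi>)\<^sup>2 - (dual_error g V \<pi>)\<^sup>2)\<bar>
              > gap_tolerance \<rho> V \<pi> g}
      \<le> measure_pmf.prob (datasetPmf n \<mu> P) {D. \<bar>\<Sum>i\<in>{..<n}. ?h (D i)\<bar> > ?c}"
    by (intro measure_pmf.finite_measure_mono) auto
  also have "\<dots> \<le> 2 * exp (- u)"
    unfolding datasetPmf_def
    by (rule prob_Pi_pmf_abs_sum_gt_bernstein[OF _ finite_set_sample mean
          centered_loss_gap_bounded[OF V \<pi> g] _ \<sigma> u])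
      (simp_all add: variance_loss_gap[OF V \<pi> g, folded \<sigma>_def])
  finally show ?thesis .
qed

lemma sbeed_output_bellman_error_le:
  assumes deviation: "\<And>V \<pi> g. V \<in> VV \<Longrightarrow> \<pi> \<in> PP \<Longrightarrow> g \<in> GG \<Longrightarrow>
        \<bar>empirical_gap n D V \<pi> g - ((bellman_error V \<pi>)\<^sup>2 - (dual_error g V \<pi>)\<^sup>2)\<bar>
          \<le> gap_tolerance \<rho> V \<pi> g"
    and \<rho>: "\<rho> \<ge> 0"
    and sbeed_output: "(Vh, \<pi>h) \<in> sbeedOutputs R \<gamma> lam n D VV PP GG"
  shows "bellman_error Vh \<pi>h
           \<le> 21 * \<rho> + sqrt (eps_VP R P \<gamma> lam \<mu> VV PP) + sqrt (eps_GVP R P \<gamma> lam \<mu> GG VV PP)"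
proof -
  let ?obj = "sbeedObj R \<gamma> lam n D GG" and ?gap = "empirical_gap n D"
  have Vh: "Vh \<in> VV" "\<pi>h \<in> PP"
    and optimal: "\<And>V \<pi>. V \<in> VV \<Longrightarrow> \<pi> \<in> PP \<Longrightarrow> ?obj Vh \<pi>h \<le> ?obj V \<pi>"
    using sbeed_output by (auto simp: sbeedOutputs_def)
  obtain Vs \<pi>s where Vs: "Vs \<in> VV" "\<pi>s \<in> PP"
    and eps_VP: "eps_VP R P \<gamma> lam \<mu> VV PP = (bellman_error Vs \<pi>s)\<^sup>2"
    using eps_VP_attained[OF finite_VV VV_nonempty finite_PP PP_nonempty] .
  obtain gh where gh: "gh \<in> GG" and eps_GVP: "(dual_error gh Vh \<pi>h)\<^sup>2 \<le> eps_GVP R P \<gamma> lam \<mu> GG VV PP"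
    using eps_GVP_ge_best_fit[OF finite_VV finite_PP finite_GG GG_nonempty Vh] .
  have "?obj Vs \<pi>s \<in> ?gap Vs \<pi>s ` GG"
    unfolding sbeedObj_def using finite_GG GG_nonempty by (intro Max_in) auto
  then obtain g' where g': "g' \<in> GG" "?obj Vs \<pi>s = ?gap Vs \<pi>s g'" by auto
  have "?gap Vh \<pi>h gh \<le> ?obj Vh \<pi>h"
    unfolding sbeedObj_def using finite_GG gh by (intro Max_ge) auto
  also have "\<dots> \<le> ?gap Vs \<pi>s g'"
    using optimal[OF Vs] g' by simp
  finally have "?gap Vh \<pi>h gh \<le> ?gap Vs \<pi>s g'" .
  then have "bellman_error Vh \<pi>h \<le> 21 * \<rho> + bellman_error Vs \<pi>s + dual_error gh Vh \<pi>h"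
    using deviation[OF Vh gh] deviation[OF Vs g'(1)]
    by (intro le_of_perturbed_square_gap[where e' = "dual_error g' Vs \<pi>s"] norm2mu_nonneg \<rho>)
      (simp add: abs_le_iff)
  moreover have "sqrt (eps_VP R P \<gamma> lam \<mu> VV PP) = bellman_error Vs \<pi>s"
    by (simp add: eps_VP norm2mu_nonneg)
  moreover have "dual_error gh Vh \<pi>h \<le> sqrt (eps_GVP R P \<gamma> lam \<mu> GG VV PP)"
    using real_sqrt_le_mono[OF eps_GVP] by (simp add: norm2mu_nonneg)
  ultimately show ?thesis by linarith
qed

lemma prob_uniform_loss_gap_deviation:
  assumes n: "n > 0" and \<delta>: "0 < \<delta>" "\<delta> < 1"
  defines "\<rho> \<equiv> sqrt (Vm\<^sup>2 * ln (real (card VV) * real (card PP) * real (card GG) / \<delta>) / real n)"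
  shows "measure_pmf.prob (datasetPmf n \<mu> P)
           {D. \<exists>V\<in>VV. \<exists>\<pi>\<in>PP. \<exists>g\<in>GG.
                 \<bar>empirical_gap n D V \<pi> g - ((bellman_error V \<pi>)\<^sup>2 - (dual_error g V \<pi>)\<^sup>2)\<bar>
                 > gap_tolerance \<rho> V \<pi> g}
         \<le> 2 * \<delta>"
proof -
  let ?Q = "datasetPmf n \<mu> P" and ?T = "VV \<times> PP \<times> GG"
  define N where "N = real (card VV) * real (card PP) * real (card GG)"
  define u where "u = ln (N / \<delta>)"
  define bad where "bad = (\<lambda>(V, \<pi>, g). {D.
      \<bar>empirical_gap n D V \<pi> g - ((bellman_error V \<pi>)\<^sup>2 - (dual_error g V \<pi>)\<^sup>2)\<bar>
        > gap_tolerance \<rho> V \<pi> g})"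
  have card_T: "real (card ?T) = N"
    by (simp add: N_def card_cartesian_product)
  have N: "N \<ge> 1"
    using card_classes_ge_1(2) by (simp add: N_def)
  then have u: "u > 0" and exp_u: "exp (- u) = \<delta> / N"
    using \<delta> by (simp_all add: u_def exp_minus less_divide_eq_1_pos)
  have "Vm\<^sup>2 * ln (real (card VV) * real (card PP) * real (card GG) / \<delta>) / real n = Vm\<^sup>2 * (u / real n)"
    by (simp add: u_def N_def)
  then have \<rho>_eq: "\<rho> = Vm * sqrt (u / real n)"
    using Vm_nonneg by (simp only: \<rho>_def real_sqrt_mult real_sqrt_abs abs_of_nonneg)
  have "{D. \<exists>V\<in>VV. \<exists>\<pi>\<in>PP. \<exists>g\<in>GG.
                 \<bar>empirical_gap n D V \<pi> g - ((bellman_error V \<pi>)\<^sup>2 - (dual_error g V \<pi>)\<^sup>2)\<bar>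
                 > gap_tolerance \<rho> V \<pi> g} = \<Union>(bad ` ?T)"
    by (auto simp: bad_def)
  moreover have "measure_pmf.prob ?Q (\<Union>(bad ` ?T)) \<le> (\<Sum>x\<in>?T. measure_pmf.prob ?Q (bad x))"
    by (intro measure_pmf.finite_measure_subadditive_finite) (auto simp: finite_VV finite_PP finite_GG)
  moreover have "\<dots> \<le> (\<Sum>x\<in>?T. 2 * exp (- u))"
    unfolding bad_def \<rho>_eq by (intro sum_mono) (auto intro!: prob_loss_gap_deviation u n)
  moreover have "\<dots> = 2 * \<delta>"
    using N by (simp add: card_T exp_u)
  ultimately show ?thesis by simp
qed

theorem sbeed_bellman_error_bound:
  assumes n: "n > 0" and \<delta>: "0 < \<delta>" "\<delta> < 1"
  defines "iota \<equiv> Vm\<^sup>2 * ln (real (card VV) * real (card PP) * real (card GG) / \<delta>)"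
  shows "measure_pmf.prob (datasetPmf n \<mu> P)
           {D. \<forall>(Vh, \<pi>h) \<in> sbeedOutputs R \<gamma> lam n D VV PP GG.
                 bellman_error Vh \<pi>h \<le> 21 * sqrt (iota / real n)
                   + sqrt (eps_VP R P \<gamma> lam \<mu> VV PP) + sqrt (eps_GVP R P \<gamma> lam \<mu> GG VV PP)}
         \<ge> 1 - 2 * \<delta>"
proof -
  let ?Q = "datasetPmf n \<mu> P" and ?\<rho> = "sqrt (iota / real n)"
  let ?bad = "{D. \<exists>V\<in>VV. \<exists>\<pi>\<in>PP. \<exists>g\<in>GG.
      \<bar>empirical_gap n D V \<pi> g - ((bellman_error V \<pi>)\<^sup>2 - (dual_error g V \<pi>)\<^sup>2)\<bar> > gap_tolerance ?\<rho> V \<pi> g}"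
  have "iota \<ge> 0"
    unfolding iota_def using card_classes_ge_1(2) \<delta> by (rule scaled_ln_ratio_nonneg)
  then have \<rho>: "?\<rho> \<ge> 0" by simp
  have "bellman_error Vh \<pi>h
      \<le> 21 * ?\<rho> + sqrt (eps_VP R P \<gamma> lam \<mu> VV PP) + sqrt (eps_GVP R P \<gamma> lam \<mu> GG VV PP)"
    if "D \<notin> ?bad" "(Vh, \<pi>h) \<in> sbeedOutputs R \<gamma> lam n D VV PP GG" for D Vh \<pi>h
    using that by (intro sbeed_output_bellman_error_le \<rho>) (auto simp: not_less)
  then have "UNIV - ?bad \<subseteq> {D. \<forall>(Vh, \<pi>h) \<in> sbeedOutputs R \<gamma> lam n D VV PP GG.
      bellman_error Vh \<pi>h \<le> 21 * ?\<rho> + sqrt (eps_VP R P \<gamma> lam \<mu> VV PP) + sqrt (eps_GVP R P \<gamma> lam \<mu> GG VV PP)}"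
    by auto
  then have "measure_pmf.prob ?Q (UNIV - ?bad) \<le> measure_pmf.prob ?Q {D. \<forall>(Vh, \<pi>h) \<in> sbeedOutputs R \<gamma> lam n D VV PP GG.
      bellman_error Vh \<pi>h \<le> 21 * ?\<rho> + sqrt (eps_VP R P \<gamma> lam \<mu> VV PP) + sqrt (eps_GVP R P \<gamma> lam \<mu> GG VV PP)}"
    by (rule measure_pmf.finite_measure_mono) simp
  moreover have "measure_pmf.prob ?Q (UNIV - ?bad) = 1 - measure_pmf.prob ?Q ?bad"
    by (simp add: measure_pmf.prob_compl[symmetric])
  ultimately show ?thesis
    using prob_uniform_loss_gap_deviation[OF n \<delta>] unfolding iota_def by linarith
qed

corollary sbeed_bellman_error_bound_rates:
  assumes n: "n > 0" and \<delta>: "0 < \<delta>" "\<delta> < 1"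
  defines "iota \<equiv> Vm\<^sup>2 * ln (real (card VV) * real (card PP) * real (card GG) / \<delta>)"
    and "jmath \<equiv> Vm\<^sup>2 * ln (real (card VV) * real (card PP) / \<delta>)"
    and "eVP \<equiv> eps_VP R P \<gamma> lam \<mu> VV PP" and "eGVP \<equiv> eps_GVP R P \<gamma> lam \<mu> GG VV PP"
  shows "measure_pmf.prob (datasetPmf n \<mu> P)
           {D. \<forall>(Vh, \<pi>h) \<in> sbeedOutputs R \<gamma> lam n D VV PP GG.
                 bellman_error Vh \<pi>h
                 \<le> 22 * (sqrt (jmath / real n) + sqrt eVP + root 4 (jmath / real n * eVP)
                        + sqrt eGVP + root 4 (iota / real n * eGVP) + sqrt (iota / real n))}
         \<ge> 1 - 2 * \<delta>"
proof -
  have "jmath \<ge> 0" "iota \<ge> 0"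
    unfolding jmath_def iota_def using card_classes_ge_1 \<delta> by (simp_all add: scaled_ln_ratio_nonneg)
  moreover have "eVP \<ge> 0" "eGVP \<ge> 0"
    unfolding eVP_def eGVP_def
    by (intro eps_VP_nonneg eps_GVP_nonneg finite_VV VV_nonempty finite_PP PP_nonempty
        finite_GG GG_nonempty)+
  ultimately have "21 * sqrt (iota / real n) + sqrt eVP + sqrt eGVP
      \<le> 22 * (sqrt (jmath / real n) + sqrt eVP + root 4 (jmath / real n * eVP)
              + sqrt eGVP + root 4 (iota / real n * eGVP) + sqrt (iota / real n))"
    by (simp add: real_root_ge_zero)
  then have bound_mono: "{D. \<forall>(Vh, \<pi>h) \<in> sbeedOutputs R \<gamma> lam n D VV PP GG.
                 bellman_error Vh \<pi>h \<le> 21 * sqrt (iota / real n) + sqrt eVP + sqrt eGVP}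
      \<subseteq> {D. \<forall>(Vh, \<pi>h) \<in> sbeedOutputs R \<gamma> lam n D VV PP GG.
                 bellman_error Vh \<pi>h
                 \<le> 22 * (sqrt (jmath / real n) + sqrt eVP + root 4 (jmath / real n * eVP)
                        + sqrt eGVP + root 4 (iota / real n * eGVP) + sqrt (iota / real n))}"
    by (auto intro: order_trans)
  have "1 - 2 * \<delta> \<le> measure_pmf.prob (datasetPmf n \<mu> P) {D. \<forall>(Vh, \<pi>h) \<in> sbeedOutputs R \<gamma> lam n D VV PP GG.
                 bellman_error Vh \<pi>h \<le> 21 * sqrt (iota / real n) + sqrt eVP + sqrt eGVP}"
    using sbeed_bellman_error_bound[OF n \<delta>] unfolding iota_def eVP_def eGVP_def .
  also have "\<dots> \<le> measure_pmf.prob (datasetPmf n \<mu> P) {D. \<forall>(Vh, \<pi>h) \<in> sbeedOutputs R \<gamma> lam n D VV PP GG.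
                 bellman_error Vh \<pi>h
                 \<le> 22 * (sqrt (jmath / real n) + sqrt eVP + root 4 (jmath / real n * eVP)
                        + sqrt eGVP + root 4 (iota / real n * eGVP) + sqrt (iota / real n))}"
    by (rule measure_pmf.finite_measure_mono[OF bound_mono]) simp
  finally show ?thesis .
qed

end

theorem mainTheorem9:
  "\<exists>c::real. c > 0 \<and>
    (\<forall>(S::nat set) (A::nat set) (P::nat \<Rightarrow> nat \<Rightarrow> nat pmf) (R::nat \<Rightarrow> nat \<Rightarrow> real)
       (Rmax::real) (\<gamma>::real) (lam::real) (\<mu>::(nat \<times> nat) pmf)
       (VV::(nat \<Rightarrow> real) set) (PP::policy set) (GG::(nat \<Rightarrow> nat \<Rightarrow> real) set)
       (n::nat) (\<delta>::real).
     finite S \<and> S \<noteq> {} \<and> finite A \<and> A \<noteq> {} \<and>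
     (\<forall>s\<in>S. \<forall>a\<in>A. set_pmf (P s a) \<subseteq> S) \<and>
     (\<forall>s\<in>S. \<forall>a\<in>A. 0 \<le> R s a \<and> R s a \<le> Rmax) \<and>
     0 \<le> \<gamma> \<and> \<gamma> < 1 \<and> lam > 0 \<and>
     set_pmf \<mu> \<subseteq> S \<times> A \<and>
     finite VV \<and> VV \<noteq> {} \<and> finite PP \<and> PP \<noteq> {} \<and> finite GG \<and> GG \<noteq> {} \<and>
     (\<forall>V\<in>VV. \<forall>s\<in>S. 0 \<le> V s \<and> V s \<le> Vlmax \<gamma> Rmax lam A) \<and>
     (\<forall>\<pi>\<in>PP. \<forall>s\<in>S. set_pmf (\<pi> s) \<subseteq> A \<and>
        (\<forall>a\<in>A. pmf (\<pi> s) a > 0 \<and> \<bar>ln (pmf (\<pi> s) a)\<bar> \<le> Vlmax \<gamma> Rmax lam A / lam)) \<and>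
     (\<forall>g\<in>GG. \<forall>s\<in>S. \<forall>a\<in>A. 0 \<le> g s a \<and> g s a \<le> 2 * Vlmax \<gamma> Rmax lam A) \<and>
     n > 0 \<and> 0 < \<delta> \<and> \<delta> < 1
     \<longrightarrow>
     (let Vm = Vlmax \<gamma> Rmax lam A;
          iota = Vm\<^sup>2 * ln (real (card VV) * real (card PP) * real (card GG) / \<delta>);
          jmath = Vm\<^sup>2 * ln (real (card VV) * real (card PP) / \<delta>);
          eVP = eps_VP R P \<gamma> lam \<mu> VV PP;
          eGVP = eps_GVP R P \<gamma> lam \<mu> GG VV PP
      in measure_pmf.prob (datasetPmf n \<mu> P)
           {D. \<forall>(Vh, \<pi>h) \<in> sbeedOutputs R \<gamma> lam n D VV PP GG.
                 norm2mu \<mu> (\<lambda>s a. Vh s - softBellman R P \<gamma> lam \<pi>h Vh s a)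
                 \<le> c * (sqrt (jmath / real n) + sqrt eVP + root 4 (jmath / real n * eVP)
                        + sqrt eGVP + root 4 (iota / real n * eGVP) + sqrt (iota / real n))}
         \<ge> 1 - 4 * \<delta>))"
proof (intro exI[of _ "22::real"] conjI allI impI, goal_cases)
  case 1
  show ?case by simp
next
  case (2 S A P R Rmax \<gamma> lam \<mu> VV PP GG n \<delta>)
  then interpret sbeed_problem S A P R Rmax \<gamma> lam \<mu> VV PP GG
    by unfold_locales auto
  have "n > 0" "0 < \<delta>" "\<delta> < 1"
    using 2 by auto
  with sbeed_bellman_error_bound_rates[OF this] show ?case
    unfolding Let_def by linarith
qed

end
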